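(* Fix $1<p<2$. For every sufficiently small $\varepsilon>0$ the following holds: if $(g,h)$ is the unique solution on $[0,\infty)$ of the system (S) described in the context with initial conditions $g(0)=-1$ and $h(0)=\varepsilon$ (i.e. at $r=1$), then $h>0$ and $g<0$ on all of $[0,\infty)$.
   Context: Mass 2 spatial Schwarzschild: $(\mathbb{R}^3\setminus B_1(0),g_s=(1+1/r)^4\delta_{ij})$, $r=|x|$. Let $u_s$ be the radial solution of $\operatorname{div}_{g_s}(|\nabla u_s|^{p-2}\nabla u_s)=0$ with $u_s=1$ at $r=1$, $u_s\to0$ as $r\to\infty$; $w_s=(1-p)\log u_s$, and $r\mapsto t=w_s(r)$ is an increasing bijection $[1,\infty)\to[0,\infty)$. $W_s(t)=\int_{\{w_s=t\}}|\nabla w_s|_{g_s}^2\,da_{g_s}$. System (S) for functions $g,h$ of $t$: $\left(\frac{dg}{dt}+h\right)W_s^2+\left(g-2(p-2)h+(p-1)(3-p)\frac{dh}{dt}\right)W_s\frac{dW_s}{dt}+\frac{(p-1)(5-p)}{4}h\left(\frac{dW_s}{dt}\right)^2=0$ and $\left(\frac{dg}{dt}+h\right)W_s^2-\frac{(p-1)(5-p)}{4}h\left(\frac{dW_s}{dt}\right)^2=0$. (This is a linear first-order system whose solutions exist on all of $[0,\infty)$ and are determined by $g(0),h(0)$.) *)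

theory Defs
  imports "HOL-Analysis.Analysis"
begin

text \<open>Conformal factor of the mass 2 spatial Schwarzschild metric
  g_s = (1 + 1/r)^4 delta, as a function of r = |x|.\<close>
definition schw_phi :: "real \<Rightarrow> real" where
  "schw_phi r = 1 + 1 / r"

text \<open>For a radial function u(r), the equation div_g(|grad u|_g^(p-2) grad u) = 0 for
  g = phi^4 delta on R^3 reduces to (r^2 phi^(6-2p) |u'|^(p-2) u')' = 0, i.e.
  |u'| = c (r^2 phi^(6-2p))^(-1/(p-1)).  The decaying solution with u(1) = 1 is
  u_s(r) = (int_r^oo rho) / (int_1^oo rho), rho the profile below.\<close>
definition schw_rho :: "real \<Rightarrow> real \<Rightarrow> real" where
  "schw_rho p r = (r\<^sup>2 * schw_phi r powr (6 - 2 * p)) powr (- 1 / (p - 1))"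

definition u_s :: "real \<Rightarrow> real \<Rightarrow> real" where
  "u_s p r = integral {r..} (schw_rho p) / integral {1..} (schw_rho p)"

definition w_s :: "real \<Rightarrow> real \<Rightarrow> real" where
  "w_s p r = (1 - p) * ln (u_s p r)"

text \<open>Inverse of r \<mapsto> t = w_s(r) (taken on r > 0, so that t ranges over an open
  interval containing [0, oo), and r(0) = 1).\<close>
definition r_of_t :: "real \<Rightarrow> real \<Rightarrow> real" where
  "r_of_t p t = inv_into {0<..} (w_s p) t"

text \<open>W_s(t) = int_{w_s = t} |grad w_s|_{g_s}^2 da_{g_s}: on the coordinate sphere of
  radius r, |grad w|_g^2 = phi^(-4) (w'(r))^2 and the g_s-area is 4 pi r^2 phi^4.\<close>
definition W_s :: "real \<Rightarrow> real \<Rightarrow> real" where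
  "W_s p t = (let r = r_of_t p t in
      (deriv (w_s p) r)\<^sup>2 / (schw_phi r) ^ 4 * (4 * pi * r\<^sup>2 * (schw_phi r) ^ 4))"

definition system_S :: "real \<Rightarrow> real \<Rightarrow> real \<Rightarrow> real \<Rightarrow> real \<Rightarrow> real \<Rightarrow> bool" where
  "system_S p t gv hv dg dh \<longleftrightarrow>
     (let W = W_s p t; W' = deriv (W_s p) t in
       (dg + hv) * W\<^sup>2 + (gv - 2 * (p - 2) * hv + (p - 1) * (3 - p) * dh) * W * W'
         + (p - 1) * (5 - p) / 4 * hv * W'\<^sup>2 = 0
     \<and> (dg + hv) * W\<^sup>2 - (p - 1) * (5 - p) / 4 * hv * W'\<^sup>2 = 0)"

end

theory Submission
  imports Defs
begin

text \<open>
  Put \<open>a = W_s'/W_s\<close> and \<open>c = (p - 1)(5 - p)/4\<close>. Where \<open>W_s, W_s' > 0\<close>, (S) is equivalent to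
  \<open>g' = -h + c h a\<^sup>2\<close> and \<open>(p - 1)(3 - p) h' = -g - 2(2 - p) h - 2 c h a\<close>. For
  \<open>\<phi> = g + (3 - p) h\<close> this gives \<open>\<phi>' + \<phi>/(p - 1) = c h a (a - 2/(p - 1))\<close>, and while
  \<open>\<phi> \<le> 0\<close> also \<open>h' + 2h/(p - 1) \<ge> 0\<close>. So if \<open>0 \<le> a \<le> 2/(p - 1)\<close>, the integrating
  factors \<open>exp (t/(p - 1))\<close> and \<open>exp (2t/(p - 1))\<close> show that neither \<open>h > 0\<close> nor \<open>\<phi> < 0\<close> can be
  lost first. Both hold at \<open>t = 0\<close> when \<open>\<epsilon> < 1/(3 - p)\<close>, and then \<open>g = \<phi> - (3 - p) h < 0\<close>.

  The bound \<open>0 < a \<le> 2/(p - 1)\<close> comes from the explicit radial solution. With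
  \<open>J(r) = \<integral>\<^sub>r\<^sup>\<infinity> \<rho>\<close> one has \<open>w_s' = (p - 1) \<rho>/J\<close> and \<open>W_s(w_s(r)) = ((p - 1) \<rho>/J)\<^sup>2 4\<pi>r\<^sup>2\<close>,
  hence \<open>a = 2 (\<rho>'/\<rho> + 1/r + \<rho>/J) / ((p - 1) \<rho>/J)\<close>. For \<open>r \<ge> 1\<close> the explicit
  \<open>\<rho>'/\<rho> + 1/r\<close> is \<open>\<le> 0\<close>, and \<open>\<rho>'/\<rho> + 1/r + \<rho>/J > 0\<close> follows from comparing \<open>J\<close>
  with \<open>\<rho> B\<close>, \<open>B = -1/(\<rho>'/\<rho> + 1/r)\<close>: the difference \<open>\<rho> B - J\<close> is decreasing and tends to 0.
\<close>

section \<open>A comparison argument for the reduced system\<close>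

lemma exp_mult_le_of_differential_inequality:
  fixes f f' :: "real \<Rightarrow> real"
  assumes "a \<le> b" and cont: "continuous_on {a..b} f"
    and deriv: "\<And>t. a < t \<Longrightarrow> t < b \<Longrightarrow> (f has_real_derivative f' t) (at t)"
    and ineq: "\<And>t. a < t \<Longrightarrow> t < b \<Longrightarrow> f' t + c * f t \<ge> 0"
  shows "exp (c * a) * f a \<le> exp (c * b) * f b"
proof (rule DERIV_nonneg_imp_increasing_open[OF \<open>a \<le> b\<close>])
  fix t
  assume t: "a < t" "t < b"
  have "((\<lambda>t. exp (c * t) * f t) has_real_derivative exp (c * t) * (f' t + c * f t)) (at t)"
    using deriv[OF t] by (auto intro!: derivative_eq_intros simp: algebra_simps)
  then show "\<exists>y. ((\<lambda>t. exp (c * t) * f t) has_real_derivative y) (at t) \<and> y \<ge> 0"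
    using ineq[OF t] by auto
next
  show "continuous_on {a..b} (\<lambda>t. exp (c * t) * f t)"
    using cont by (intro continuous_intros)
qed

lemma first_point_of_closed_set:
  fixes S :: "real set"
  assumes "closed S" "S \<noteq> {}" "S \<subseteq> {a..}"
  obtains T where "T \<in> S" "\<And>s. s < T \<Longrightarrow> s \<notin> S"
proof
  have "bdd_below S"
    using assms(3) by (auto intro: bdd_belowI)
  then show "Inf S \<in> S"
    using assms(1,2) closed_contains_Inf by blast
  show "s \<notin> S" if "s < Inf S" for s
    using that cInf_lower[OF _ \<open>bdd_below S\<close>] by force
qed

lemma reduced_system_inequalities:
  fixes p g h g' h' a :: real
  assumes "1 < p" "p < 3"
    and g': "g' = - h + (p - 1) * (5 - p) / 4 * h * a\<^sup>2"
    and h': "(p - 1) * (3 - p) * h' = - g - 2 * (2 - p) * h - (p - 1) * (5 - p) / 2 * h * a"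
    and a: "0 \<le> a" "a \<le> 2 / (p - 1)" and h: "0 \<le> h"
  shows "g' + (3 - p) * h' + (g + (3 - p) * h) / (p - 1) \<le> 0"
    and "g + (3 - p) * h \<le> 0 \<Longrightarrow> h' + 2 / (p - 1) * h \<ge> 0"
proof -
  have "(p - 1) * (g' + (3 - p) * h' + (g + (3 - p) * h) / (p - 1))
      = (p - 1) * g' + (p - 1) * (3 - p) * h' + (g + (3 - p) * h)"
    using assms(1) by (simp add: field_simps)
  also have "\<dots> = (p - 1) * (5 - p) / 4 * h * a * ((p - 1) * a - 2)"
    unfolding g' h' by (simp add: field_simps power2_eq_square)
  also have "\<dots> \<le> 0"
  proof -
    have "(p - 1) * a - 2 \<le> 0"
      using assms(1) a(2) by (simp add: field_simps)
    then show ?thesis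
      using assms(1,2) a h by (intro mult_nonneg_nonpos mult_nonneg_nonneg) auto
  qed
  finally show "g' + (3 - p) * h' + (g + (3 - p) * h) / (p - 1) \<le> 0"
    using assms(1) by (simp add: mult_le_0_iff)
  assume "g + (3 - p) * h \<le> 0"
  have "(p - 1) * (3 - p) * (h' + 2 / (p - 1) * h) = (p - 1) * (3 - p) * h' + 2 * (3 - p) * h"
    using assms(1) by (simp add: field_simps)
  also have "\<dots> = - (g + (3 - p) * h) + (5 - p) * h * (1 - (p - 1) / 2 * a)"
    unfolding h' by (simp add: field_simps)
  also have "\<dots> \<ge> 0"
    using assms(1,2) a h \<open>g + (3 - p) * h \<le> 0\<close>
    by (intro add_nonneg_nonneg mult_nonneg_nonneg) (auto simp: field_simps)
  finally have "0 \<le> (p - 1) * (3 - p) * (h' + 2 / (p - 1) * h)" .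
  moreover have "0 < (p - 1) * (3 - p)"
    using assms(1,2) by simp
  ultimately show "h' + 2 / (p - 1) * h \<ge> 0"
    by (simp add: zero_le_mult_iff)
qed

lemma reduced_system_signs_extend:
  fixes p T :: real and g h g' h' a :: "real \<Rightarrow> real"
  assumes p: "1 < p" "p < 3" and "T > 0"
    and cont: "continuous_on {0..T} g" "continuous_on {0..T} h"
    and deriv: "\<And>s. 0 < s \<Longrightarrow> s < T \<Longrightarrow>
      (g has_real_derivative g' s) (at s) \<and> (h has_real_derivative h' s) (at s)"
    and g': "\<And>s. s \<ge> 0 \<Longrightarrow> g' s = - h s + (p - 1) * (5 - p) / 4 * h s * (a s)\<^sup>2"
    and h': "\<And>s. s \<ge> 0 \<Longrightarrow>
      (p - 1) * (3 - p) * h' s = - g s - 2 * (2 - p) * h s - (p - 1) * (5 - p) / 2 * h s * a s"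
    and a: "\<And>s. s \<ge> 0 \<Longrightarrow> 0 \<le> a s \<and> a s \<le> 2 / (p - 1)"
    and signs: "\<And>s. 0 \<le> s \<Longrightarrow> s < T \<Longrightarrow> h s > 0 \<and> g s + (3 - p) * h s < 0"
  shows "h T > 0" and "g T + (3 - p) * h T < 0"
proof -
  define phi where "phi s = g s + (3 - p) * h s" for s
  have "exp (1 / (p - 1) * 0) * - phi 0 \<le> exp (1 / (p - 1) * T) * - phi T"
  proof (rule exp_mult_le_of_differential_inequality[where f' = "\<lambda>s. - (g' s + (3 - p) * h' s)"])
    show "continuous_on {0..T} (\<lambda>s. - phi s)"
      unfolding phi_def using cont by (intro continuous_intros)
    fix s
    assume s: "0 < s" "s < T"
    show "((\<lambda>s. - phi s) has_real_derivative - (g' s + (3 - p) * h' s)) (at s)"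
      unfolding phi_def using deriv[OF s] by (auto intro!: derivative_eq_intros)
    have "g' s + (3 - p) * h' s + phi s / (p - 1) \<le> 0"
      using reduced_system_inequalities(1)[OF p g' h'] a signs[of s] s
      unfolding phi_def by (simp add: less_imp_le)
    then show "- (g' s + (3 - p) * h' s) + 1 / (p - 1) * - phi s \<ge> 0"
      by simp
  qed (use \<open>T > 0\<close> in auto)
  then have "0 < exp (1 / (p - 1) * T) * - phi T"
    using signs[of 0] \<open>T > 0\<close> by (simp add: phi_def)
  then have "phi T < 0"
    by (simp add: mult_less_0_iff)
  then show "g T + (3 - p) * h T < 0"
    by (simp add: phi_def)
  have "exp (2 / (p - 1) * 0) * h 0 \<le> exp (2 / (p - 1) * T) * h T"
  proof (rule exp_mult_le_of_differential_inequality[where f' = h'])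
    fix s
    assume s: "0 < s" "s < T"
    show "(h has_real_derivative h' s) (at s)"
      using deriv[OF s] by simp
    show "h' s + 2 / (p - 1) * h s \<ge> 0"
      using reduced_system_inequalities(2)[OF p g' h'] a signs[of s] s
      by (simp add: less_imp_le)
  qed (use \<open>T > 0\<close> cont in auto)
  then have "0 < exp (2 / (p - 1) * T) * h T"
    using signs[of 0] \<open>T > 0\<close> by simp
  then show "h T > 0"
    by (simp add: zero_less_mult_iff)
qed

lemma reduced_system_signs:
  fixes p :: real and g h g' h' a :: "real \<Rightarrow> real"
  assumes p: "1 < p" "p < 3"
    and g_deriv: "\<And>t. t \<ge> 0 \<Longrightarrow> (g has_real_derivative g' t) (at t within {0..})"
    and h_deriv: "\<And>t. t \<ge> 0 \<Longrightarrow> (h has_real_derivative h' t) (at t within {0..})"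
    and g': "\<And>t. t \<ge> 0 \<Longrightarrow> g' t = - h t + (p - 1) * (5 - p) / 4 * h t * (a t)\<^sup>2"
    and h': "\<And>t. t \<ge> 0 \<Longrightarrow>
      (p - 1) * (3 - p) * h' t = - g t - 2 * (2 - p) * h t - (p - 1) * (5 - p) / 2 * h t * a t"
    and a: "\<And>t. t \<ge> 0 \<Longrightarrow> 0 \<le> a t \<and> a t \<le> 2 / (p - 1)"
    and h0: "h 0 > 0" and phi0: "g 0 + (3 - p) * h 0 < 0"
  shows "\<forall>t\<ge>0. h t > 0 \<and> g t < 0"
proof (rule ccontr)
  define S where "S = {t \<in> {0..}. h t \<le> 0 \<or> g t + (3 - p) * h t \<ge> 0}"
  have cont: "continuous_on {0..} g" "continuous_on {0..} h"
    using g_deriv h_deriv by (auto simp: continuous_on_eq_continuous_within intro: DERIV_continuous)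
  have "S = {0..} \<inter> h -` {..0} \<union> {0..} \<inter> (\<lambda>t. g t + (3 - p) * h t) -` {0..}"
    by (auto simp: S_def)
  moreover have "continuous_on {0..} (\<lambda>t. g t + (3 - p) * h t)"
    using cont by (intro continuous_intros)
  ultimately have "closed S"
    using cont(2) by (auto intro!: closed_Un continuous_closed_preimage)
  assume "\<not> (\<forall>t\<ge>0. h t > 0 \<and> g t < 0)"
  then obtain t where "t \<ge> 0" "h t \<le> 0 \<or> g t \<ge> 0"
    by force
  then have "t \<in> S"
    using p by (auto simp: S_def not_le intro!: add_nonneg_nonneg mult_nonneg_nonneg)
  then obtain T where "T \<in> S" and before_T: "\<And>s. s < T \<Longrightarrow> s \<notin> S"
    using first_point_of_closed_set[OF \<open>closed S\<close>, of 0] by (auto simp: S_def)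
  have "T \<ge> 0" "h T \<le> 0 \<or> g T + (3 - p) * h T \<ge> 0"
    using \<open>T \<in> S\<close> by (auto simp: S_def)
  then have "T > 0"
    using h0 phi0 by (cases "T = 0") auto
  have cont_T: "continuous_on {0..T} g" "continuous_on {0..T} h"
    using cont by (auto intro: continuous_on_subset)
  have deriv_at: "(g has_real_derivative g' s) (at s) \<and> (h has_real_derivative h' s) (at s)"
    if "0 < s" for s
    using g_deriv[of s] h_deriv[of s] that at_within_interior[of s "{0..}"] by auto
  have signs: "h s > 0 \<and> g s + (3 - p) * h s < 0" if "0 \<le> s" "s < T" for s
    using before_T[OF that(2)] that(1) by (auto simp: S_def)
  have "h T > 0 \<and> g T + (3 - p) * h T < 0"
    using reduced_system_signs_extend[OF p \<open>T > 0\<close> cont_T deriv_at g' h' a signs] by blast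
  then show False
    using \<open>T \<in> S\<close> by (simp add: S_def)
qed

lemma system_S_solved:
  fixes p t gv hv dg dh :: real
  assumes S: "system_S p t gv hv dg dh" and W: "W_s p t > 0" and V: "deriv (W_s p) t > 0"
  defines "a \<equiv> deriv (W_s p) t / W_s p t"
  shows "dg = - hv + (p - 1) * (5 - p) / 4 * hv * a\<^sup>2"
    and "(p - 1) * (3 - p) * dh = - gv - 2 * (2 - p) * hv - (p - 1) * (5 - p) / 2 * hv * a"
proof -
  define c where "c = (p - 1) * (5 - p) / 4"
  define X where "X = gv - 2 * (p - 2) * hv + (p - 1) * (3 - p) * dh"
  have V_eq: "deriv (W_s p) t = a * W_s p t"
    using W by (simp add: a_def)
  have a_pos: "a > 0"
    using W V by (simp add: a_def)
  have e1: "(dg + hv) * (W_s p t)\<^sup>2 + X * a * (W_s p t)\<^sup>2 + c * hv * a\<^sup>2 * (W_s p t)\<^sup>2 = 0"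
    and e2: "(dg + hv) * (W_s p t)\<^sup>2 - c * hv * a\<^sup>2 * (W_s p t)\<^sup>2 = 0"
    using S unfolding system_S_def Let_def V_eq c_def X_def by (simp_all add: power2_eq_square algebra_simps)
  have "(dg + hv - c * hv * a\<^sup>2) * (W_s p t)\<^sup>2 = 0"
    using e2 by (simp add: algebra_simps)
  then show "dg = - hv + (p - 1) * (5 - p) / 4 * hv * a\<^sup>2"
    using W by (simp add: c_def)
  have "(X + 2 * c * hv * a) * (a * (W_s p t)\<^sup>2) = 0"
    using e1 e2 by (simp add: algebra_simps power2_eq_square)
  then have "X + 2 * c * hv * a = 0"
    using W a_pos by simp
  then show "(p - 1) * (3 - p) * dh = - gv - 2 * (2 - p) * hv - (p - 1) * (5 - p) / 2 * hv * a"
    unfolding X_def c_def by (simp add: field_simps)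
qed

section \<open>The radial Schwarzschild solution\<close>

lemma schw_phi_pos: "r > 0 \<Longrightarrow> schw_phi r > 0"
  by (simp add: schw_phi_def add_pos_pos)

context
  fixes p :: real
  assumes p_gt_1: "1 < p" and p_lt_3: "p < 3"
begin

definition schw_tail :: "real \<Rightarrow> real" where
  "schw_tail r = integral {r..} (schw_rho p)"

definition rho_log_deriv :: "real \<Rightarrow> real" where
  "rho_log_deriv r = - (2 / r - (6 - 2 * p) / (r * (r + 1))) / (p - 1)"

lemma schw_rho_eq_exp:
  assumes "r > 0"
  shows "schw_rho p r = exp (- (2 * ln r + (6 - 2 * p) * ln (1 + 1 / r)) / (p - 1))"
proof -
  have "schw_rho p r = exp (- 1 / (p - 1) * ln (r\<^sup>2 * schw_phi r powr (6 - 2 * p)))"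
    using assms schw_phi_pos[OF assms] by (simp add: schw_rho_def powr_def)
  also have "ln (r\<^sup>2 * schw_phi r powr (6 - 2 * p)) = 2 * ln r + (6 - 2 * p) * ln (1 + 1 / r)"
    using assms schw_phi_pos[OF assms] by (simp add: ln_mult schw_phi_def ln_realpow)
  finally show ?thesis
    using p_gt_1 by (simp add: field_simps)
qed

lemma schw_rho_pos: "r > 0 \<Longrightarrow> schw_rho p r > 0"
  by (simp add: schw_rho_eq_exp)

lemma schw_rho_has_derivative:
  assumes "r > 0"
  shows "(schw_rho p has_real_derivative schw_rho p r * rho_log_deriv r) (at r)"
proof (rule has_field_derivative_transform_within_open[where S = "{0<..}"])
  have "(1 + 1 / r) * r = r + 1"
    using assms by (simp add: field_simps)
  then show "((\<lambda>x. exp (- (2 * ln x + (6 - 2 * p) * ln (1 + 1 / x)) / (p - 1)))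
      has_real_derivative schw_rho p r * rho_log_deriv r) (at r)"
    using assms p_gt_1
    by (auto intro!: derivative_eq_intros simp: schw_rho_eq_exp rho_log_deriv_def)
       (simp add: field_simps power2_eq_square)
qed (use assms schw_rho_eq_exp in auto)

lemma schw_rho_continuous_on: "continuous_on {0<..} (schw_rho p)"
  using schw_rho_has_derivative
  by (intro continuous_at_imp_continuous_on ballI DERIV_isCont) auto

lemma schw_rho_le_powr:
  assumes "r > 0"
  shows "schw_rho p r \<le> r powr (- 2 / (p - 1))"
proof -
  have "1 \<le> schw_phi r powr (6 - 2 * p)"
    using assms p_lt_3 by (intro ge_one_powr_ge_zero) (auto simp: schw_phi_def)
  then have "(r\<^sup>2 * schw_phi r powr (6 - 2 * p)) powr (- 1 / (p - 1)) \<le> (r\<^sup>2) powr (- 1 / (p - 1))"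
    using assms p_gt_1 by (intro powr_mono2') (auto simp: mult_le_cancel_left1)
  also have "(r\<^sup>2) powr (- 1 / (p - 1)) = r powr (- 2 / (p - 1))"
  proof -
    have "r\<^sup>2 = r powr 2"
      using assms by (simp add: powr_realpow)
    then show ?thesis
      by (simp add: powr_powr)
  qed
  finally show ?thesis
    unfolding schw_rho_def .
qed

lemma powr_has_integral_tail:
  assumes "c > 0"
  shows "((\<lambda>x. x powr (- 2 / (p - 1))) has_integral c powr (1 - 2 / (p - 1)) / (2 / (p - 1) - 1)) {c..}"
proof -
  have "- 2 / (p - 1) < -1"
    using p_gt_1 p_lt_3 by (simp add: field_simps)
  moreover have "- (c powr (- 2 / (p - 1) + 1)) / (- 2 / (p - 1) + 1)
      = c powr (1 - 2 / (p - 1)) / (2 / (p - 1) - 1)"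
  proof -
    have "- 2 / (p - 1) + 1 = - (2 / (p - 1) - 1)" "1 - 2 / (p - 1) = - 2 / (p - 1) + 1"
      by simp_all
    then show ?thesis
      by (simp only: minus_divide_divide)
  qed
  ultimately show ?thesis
    using has_integral_powr_to_inf[OF _ assms] by metis
qed

lemma schw_rho_integrable_on:
  assumes "c > 0"
  shows "schw_rho p integrable_on {c..}"
proof (rule measurable_bounded_by_integrable_imp_integrable)
  show "schw_rho p \<in> borel_measurable (lebesgue_on {c..})"
    using assms
    by (intro continuous_imp_measurable_on_sets_lebesgue continuous_on_subset[OF schw_rho_continuous_on]) auto
  show "(\<lambda>x. x powr (- 2 / (p - 1))) integrable_on {c..}"
    using powr_has_integral_tail[OF assms] by blast
  show "norm (schw_rho p x) \<le> x powr (- 2 / (p - 1))" if "x \<in> {c..}" for x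
    using that assms schw_rho_le_powr[of x] schw_rho_pos[of x] by auto
qed auto

lemma schw_tail_split:
  assumes "0 < c" "c \<le> r"
  shows "schw_tail c = integral {c..r} (schw_rho p) + schw_tail r"
proof -
  have "{c..} = {c..r} \<union> {r..}" "{c..r} \<inter> {r..} = {r}"
    using assms by auto
  moreover have "schw_rho p integrable_on {c..r}"
    using assms by (intro integrable_continuous_real continuous_on_subset[OF schw_rho_continuous_on]) auto
  ultimately show ?thesis
    using assms schw_rho_integrable_on unfolding schw_tail_def by simp
qed

lemma schw_tail_has_derivative:
  assumes "r > 0"
  shows "(schw_tail has_real_derivative - schw_rho p r) (at r)"
proof (rule has_field_derivative_transform_within_open[where S = "{r/2<..<2*r}"])
  have "((\<lambda>x. integral {x..2*r} (schw_rho p)) has_real_derivative - schw_rho p r) (at r within {r/2..2*r})"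
    using assms
    by (intro integral_has_real_derivative' continuous_on_subset[OF schw_rho_continuous_on]) auto
  moreover have "at r within {r/2..2*r} = at r"
    using assms by (intro at_within_interior) auto
  ultimately show "((\<lambda>x. integral {x..2*r} (schw_rho p) + schw_tail (2*r)) has_real_derivative - schw_rho p r) (at r)"
    by (auto intro!: derivative_eq_intros)
qed (use assms in \<open>auto intro!: schw_tail_split[symmetric]\<close>)

lemma schw_tail_tendsto_0: "(schw_tail \<longlongrightarrow> 0) at_top"
proof (rule tendsto_sandwich)
  show "\<forall>\<^sub>F r in at_top. 0 \<le> schw_tail r"
    using eventually_gt_at_top[of 0]
    by eventually_elim
       (auto simp: schw_tail_def intro!: integral_nonneg schw_rho_integrable_on less_imp_le[OF schw_rho_pos])
  show "\<forall>\<^sub>F r in at_top. schw_tail r \<le> r powr (1 - 2 / (p - 1)) / (2 / (p - 1) - 1)"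
    using eventually_gt_at_top[of 0]
  proof eventually_elim
    case (elim r)
    have "integral {r..} (schw_rho p) \<le> integral {r..} (\<lambda>x. x powr (- 2 / (p - 1)))"
      using elim powr_has_integral_tail[OF elim]
      by (intro integral_le schw_rho_integrable_on schw_rho_le_powr) auto
    then show ?case
      using integral_unique[OF powr_has_integral_tail[OF elim]] by (simp add: schw_tail_def)
  qed
  have "1 - 2 / (p - 1) < 0"
    using p_gt_1 p_lt_3 by (simp add: field_simps)
  then show "((\<lambda>r. r powr (1 - 2 / (p - 1)) / (2 / (p - 1) - 1)) \<longlongrightarrow> 0) at_top"
    by (intro tendsto_divide_zero tendsto_neg_powr filterlim_ident)
qed auto

lemma schw_tail_pos:
  assumes "r > 0"
  shows "schw_tail r > 0"
proof (rule DERIV_neg_imp_decreasing_at_top[OF _ schw_tail_tendsto_0])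
  fix x
  assume "x \<ge> r"
  then have "x > 0"
    using assms by simp
  then show "\<exists>y. (schw_tail has_real_derivative y) (at x) \<and> y < 0"
    using schw_tail_has_derivative schw_rho_pos by force
qed

definition tail_comparison :: "real \<Rightarrow> real" where
  "tail_comparison r = (p - 1) * r * (r + 1) / ((3 - p) * (r - 1))"

lemma rho_log_deriv_add_inverse:
  assumes "r > 0"
  shows "rho_log_deriv r + 1 / r = (p - 3) * (r - 1) / ((p - 1) * r * (r + 1))"
  using assms p_gt_1
  by (simp add: rho_log_deriv_def divide_simps) (simp add: algebra_simps power2_eq_square)

lemma tail_comparison_has_derivative:
  assumes "r > 1"
  shows "(tail_comparison has_real_derivative (p - 1) * (r\<^sup>2 - 2 * r - 1) / ((3 - p) * (r - 1)\<^sup>2)) (at r)"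
  unfolding tail_comparison_def using assms p_lt_3
  by (auto intro!: derivative_eq_intros simp: divide_simps) (simp add: algebra_simps power2_eq_square)

lemma schw_rho_tail_comparison_tendsto_0: "((\<lambda>r. schw_rho p r * tail_comparison r) \<longlongrightarrow> 0) at_top"
proof (rule tendsto_sandwich)
  show "\<forall>\<^sub>F r in at_top. 0 \<le> schw_rho p r * tail_comparison r"
    using eventually_gt_at_top[of 1]
    by eventually_elim
      (use p_gt_1 p_lt_3 in \<open>auto intro!: mult_nonneg_nonneg divide_nonneg_pos less_imp_le[OF schw_rho_pos]
        simp: tail_comparison_def\<close>)
  show "\<forall>\<^sub>F r in at_top. schw_rho p r * tail_comparison r \<le> 3 * (p - 1) / (3 - p) * r powr (1 - 2 / (p - 1))"
    using eventually_ge_at_top[of 2]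
  proof eventually_elim
    case (elim r)
    have "(r + 1) / (r - 1) \<le> 3"
      using elim by (simp add: divide_simps)
    then have "(p - 1) / (3 - p) * r * ((r + 1) / (r - 1)) \<le> (p - 1) / (3 - p) * r * 3"
      using elim p_gt_1 p_lt_3 by (intro mult_left_mono) auto
    then have "tail_comparison r \<le> 3 * (p - 1) / (3 - p) * r"
      by (simp add: tail_comparison_def mult.commute mult.left_commute)
    then have "schw_rho p r * tail_comparison r \<le> r powr (- 2 / (p - 1)) * (3 * (p - 1) / (3 - p) * r)"
      using elim p_gt_1 p_lt_3 schw_rho_le_powr[of r] schw_rho_pos[of r]
      by (intro mult_mono) (auto simp: tail_comparison_def)
    also have "\<dots> = 3 * (p - 1) / (3 - p) * (r * r powr (- 2 / (p - 1)))"
      by simp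
    also have "r * r powr (- 2 / (p - 1)) = r powr (1 - 2 / (p - 1))"
      using elim by (subst diff_conv_add_uminus, subst powr_add) simp
    finally show ?case .
  qed
  have "1 - 2 / (p - 1) < 0"
    using p_gt_1 p_lt_3 by (simp add: field_simps)
  then show "((\<lambda>r. 3 * (p - 1) / (3 - p) * r powr (1 - 2 / (p - 1))) \<longlongrightarrow> 0) at_top"
    by (intro tendsto_mult_right_zero tendsto_neg_powr filterlim_ident)
qed auto

lemma schw_tail_less:
  assumes "r > 1"
  shows "schw_tail r < schw_rho p r * tail_comparison r"
proof -
  have "0 < schw_rho p r * tail_comparison r - schw_tail r"
  proof (rule DERIV_neg_imp_decreasing_at_top[where f = "\<lambda>x. schw_rho p x * tail_comparison x - schw_tail x"])
    fix x
    assume "x \<ge> r"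
    then have x: "x > 1"
      using assms by simp
    have "rho_log_deriv x * tail_comparison x + (p - 1) * (x\<^sup>2 - 2 * x - 1) / ((3 - p) * (x - 1)\<^sup>2) + 1
        = - 2 * x * (p - 1) / ((3 - p) * (x - 1)\<^sup>2)"
      using x p_gt_1 p_lt_3
      by (simp add: rho_log_deriv_def tail_comparison_def divide_simps) (simp add: algebra_simps power2_eq_square)
    moreover have "0 < 2 * x * (p - 1) / ((3 - p) * (x - 1)\<^sup>2)"
      using x p_gt_1 p_lt_3 by simp
    moreover have "((\<lambda>x. schw_rho p x * tail_comparison x - schw_tail x) has_real_derivative
        schw_rho p x * (rho_log_deriv x * tail_comparison x
          + (p - 1) * (x\<^sup>2 - 2 * x - 1) / ((3 - p) * (x - 1)\<^sup>2) + 1)) (at x)"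
      using x p_gt_1 p_lt_3
      by (auto intro!: derivative_eq_intros schw_rho_has_derivative schw_tail_has_derivative
          tail_comparison_has_derivative simp: algebra_simps)
    ultimately show "\<exists>y. ((\<lambda>x. schw_rho p x * tail_comparison x - schw_tail x) has_real_derivative y) (at x) \<and> y < 0"
      using schw_rho_pos[of x] x p_gt_1 p_lt_3 by (auto intro!: divide_pos_pos mult_pos_pos)
  qed (use tendsto_diff[OF schw_rho_tail_comparison_tendsto_0 schw_tail_tendsto_0] in simp)
  then show ?thesis
    by simp
qed

lemma rho_log_deriv_bounds:
  assumes "r \<ge> 1"
  shows "rho_log_deriv r + 1 / r \<le> 0"
    and "0 < rho_log_deriv r + 1 / r + schw_rho p r / schw_tail r"
proof -
  have r: "r > 0"
    using assms by simp
  show "rho_log_deriv r + 1 / r \<le> 0"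
    using assms p_gt_1 p_lt_3 unfolding rho_log_deriv_add_inverse[OF r]
    by (intro divide_nonpos_pos mult_nonpos_nonneg mult_pos_pos) auto
  show "0 < rho_log_deriv r + 1 / r + schw_rho p r / schw_tail r"
  proof (cases "r = 1")
    case True
    then show ?thesis
      using rho_log_deriv_add_inverse[of 1] schw_rho_pos[of 1]
        schw_tail_pos[of 1] by simp
  next
    case False
    then have "r > 1"
      using assms by simp
    then have "- (rho_log_deriv r + 1 / r) = 1 / tail_comparison r"
      unfolding rho_log_deriv_add_inverse[OF r] tail_comparison_def
      using p_gt_1 p_lt_3 by (simp add: divide_simps) (simp add: algebra_simps)
    also have "\<dots> < schw_rho p r / schw_tail r"
      using schw_tail_less[OF \<open>r > 1\<close>] schw_tail_pos[OF r] \<open>r > 1\<close> p_gt_1 p_lt_3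
      by (simp add: divide_simps tail_comparison_def mult.commute)
    finally show ?thesis
      by simp
  qed
qed

lemma w_s_eq_ln_tail:
  assumes "r > 0"
  shows "w_s p r = (1 - p) * ln (schw_tail r / schw_tail 1)"
  by (simp add: w_s_def u_s_def schw_tail_def)

lemma w_s_has_derivative:
  assumes "r > 0"
  shows "(w_s p has_real_derivative (p - 1) * schw_rho p r / schw_tail r) (at r)"
proof (rule has_field_derivative_transform_within_open[where S = "{0<..}"])
  show "((\<lambda>x. (1 - p) * ln (schw_tail x / schw_tail 1)) has_real_derivative
      (p - 1) * schw_rho p r / schw_tail r) (at r)"
    using assms schw_tail_pos[of r] schw_tail_pos[of 1]
    by (auto intro!: derivative_eq_intros schw_tail_has_derivative simp: divide_simps)
       (simp add: algebra_simps)
qed (use assms w_s_eq_ln_tail in auto)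

lemma w_s_derivative_pos: "r > 0 \<Longrightarrow> (p - 1) * schw_rho p r / schw_tail r > 0"
  using p_gt_1 schw_rho_pos schw_tail_pos by simp

lemma w_s_continuous_on: "continuous_on {0<..} (w_s p)"
  using w_s_has_derivative by (intro continuous_at_imp_continuous_on ballI DERIV_isCont) auto

lemma w_s_less:
  assumes "0 < x" "x < y"
  shows "w_s p x < w_s p y"
proof (rule DERIV_pos_imp_increasing[OF assms(2)])
  fix z
  assume "x \<le> z"
  then have "z > 0"
    using assms by simp
  then show "\<exists>D. (w_s p has_real_derivative D) (at z) \<and> D > 0"
    using w_s_has_derivative w_s_derivative_pos by blast
qed

lemma w_s_at_1: "w_s p 1 = 0"
  using w_s_eq_ln_tail[of 1] schw_tail_pos[of 1] by simp

lemma w_s_tendsto_at_top: "filterlim (w_s p) at_top at_top"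
proof -
  have "\<forall>\<^sub>F r in at_top. schw_tail r / schw_tail 1 > 0"
    using eventually_gt_at_top[of 0] by eventually_elim (simp add: schw_tail_pos)
  then have "filterlim (\<lambda>r. schw_tail r / schw_tail 1) (at_right 0) at_top"
    by (intro tendsto_imp_filterlim_at_right tendsto_divide_zero schw_tail_tendsto_0)
  then have "filterlim (\<lambda>r. - ln (schw_tail r / schw_tail 1)) at_top at_top"
    by (simp add: filterlim_uminus_at_top filterlim_compose[OF ln_at_0])
  then have "filterlim (\<lambda>r. (p - 1) * - ln (schw_tail r / schw_tail 1)) at_top at_top"
    using p_gt_1 by (intro filterlim_tendsto_pos_mult_at_top[OF tendsto_const]) auto
  moreover have "\<forall>\<^sub>F r in at_top. (p - 1) * - ln (schw_tail r / schw_tail 1) = w_s p r"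
    using eventually_gt_at_top[of 0] by eventually_elim (simp add: w_s_eq_ln_tail algebra_simps)
  ultimately show ?thesis
    using filterlim_cong by fastforce
qed

text \<open>\<open>W_s = W_profile \<circ> r_of_t\<close> holds on this open set, which contains \<open>[0, \<infinity>)\<close>; openness
  matters because \<^const>\<open>deriv\<close> is two-sided, also at \<open>t = 0\<close>.\<close>

lemma w_s_image: "{w_s p (1/2)<..} \<subseteq> w_s p ` {1/2<..}"
proof
  fix t
  assume t: "t \<in> {w_s p (1/2)<..}"
  have "\<forall>\<^sub>F R in at_top. R \<ge> 1/2 \<and> w_s p R \<ge> t"
    using w_s_tendsto_at_top
    by (intro eventually_conj eventually_ge_at_top) (simp add: filterlim_at_top)
  then obtain R where R: "R \<ge> 1/2" "w_s p R \<ge> t"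
    using eventually_happens'[OF trivial_limit_at_top_linorder] by blast
  have "continuous_on {1/2..R} (w_s p)"
    by (rule continuous_on_subset[OF w_s_continuous_on]) auto
  then obtain r where "1/2 \<le> r" "w_s p r = t"
    using IVT'[of "w_s p" "1/2" t R] t R by auto
  moreover have "r \<noteq> 1/2"
    using t \<open>w_s p r = t\<close> by force
  ultimately show "t \<in> w_s p ` {1/2<..}"
    by force
qed

lemma r_of_t_w_s: "r > 0 \<Longrightarrow> r_of_t p (w_s p r) = r"
  unfolding r_of_t_def using w_s_less
  by (intro inv_into_f_f strict_mono_on_imp_inj_on) (auto simp: strict_mono_on_def)

lemma w_s_preimage_ge_1:
  assumes "t \<ge> 0"
  obtains r where "r \<ge> 1" "t = w_s p r"
proof -
  have "w_s p (1/2) < w_s p 1"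
    using w_s_less by simp
  then have "t \<in> w_s p ` {1/2<..}"
    using assms w_s_at_1 w_s_image by auto
  then obtain r where "r > 1/2" "t = w_s p r"
    by auto
  moreover have "r \<ge> 1"
    using calculation assms w_s_less[of r 1] w_s_at_1 by force
  ultimately show ?thesis
    using that by blast
qed

definition W_profile :: "real \<Rightarrow> real" where
  "W_profile r = ((p - 1) * schw_rho p r / schw_tail r)\<^sup>2 * (4 * pi * r\<^sup>2)"

lemma W_profile_pos: "r > 0 \<Longrightarrow> W_profile r > 0"
  unfolding W_profile_def using w_s_derivative_pos[of r] by (intro mult_pos_pos) auto

lemma W_profile_has_derivative:
  assumes "r > 0"
  shows "(W_profile has_real_derivative
      W_profile r * (2 * (rho_log_deriv r + 1 / r + schw_rho p r / schw_tail r))) (at r)"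
proof -
  have "schw_tail r \<noteq> 0"
    using schw_tail_pos[OF assms] by simp
  then show ?thesis
    unfolding W_profile_def using assms
    by (auto intro!: derivative_eq_intros schw_rho_has_derivative schw_tail_has_derivative)
      (simp add: divide_simps; simp add: algebra_simps power2_eq_square)
qed

lemma W_s_w_s_eq:
  assumes "r > 0"
  shows "W_s p (w_s p r) = W_profile r"
  using assms schw_phi_pos[OF assms]
  by (simp add: W_s_def W_profile_def r_of_t_w_s DERIV_imp_deriv[OF w_s_has_derivative])

lemma W_s_has_derivative:
  assumes "r > 1/2"
  shows "(W_s p has_real_derivative W_profile r * (2 * (rho_log_deriv r + 1 / r + schw_rho p r / schw_tail r))
      / ((p - 1) * schw_rho p r / schw_tail r)) (at (w_s p r))"
proof (rule has_field_derivative_transform_within_open[where S = "{w_s p (1/2)<..}"])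
  define D where "D = (p - 1) * schw_rho p r / schw_tail r"
  have "D > 0"
    using assms w_s_derivative_pos[of r] unfolding D_def by simp
  have w_s_deriv: "(w_s p has_derivative (*) D) (at r)"
    using assms w_s_has_derivative[of r] by (simp add: D_def has_field_derivative_def)
  have inverse_linear: "(*) D \<circ> (*) (inverse D) = id"
    using \<open>D > 0\<close> by (auto simp: fun_eq_iff)
  have "(r_of_t p has_derivative (*) (inverse D)) (at (w_s p r))"
    using assms
    by (intro has_derivative_inverse_strong[OF open_greaterThan _ w_s_continuous_on _ w_s_deriv inverse_linear])
      (auto simp: r_of_t_w_s)
  then have r_of_t_deriv: "(r_of_t p has_real_derivative inverse D) (at (w_s p r))"
    by (simp add: has_field_derivative_def mult.commute)
  have "(W_profile has_real_derivative
      W_profile r * (2 * (rho_log_deriv r + 1 / r + schw_rho p r / schw_tail r))) (at (r_of_t p (w_s p r)))"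
    using assms W_profile_has_derivative[of r] by (simp add: r_of_t_w_s)
  from DERIV_chain2[OF this r_of_t_deriv]
  show "((\<lambda>t. W_profile (r_of_t p t)) has_real_derivative W_profile r
      * (2 * (rho_log_deriv r + 1 / r + schw_rho p r / schw_tail r)) / D) (at (w_s p r))"
    by (simp add: divide_inverse)
  show "w_s p r \<in> {w_s p (1/2)<..}"
    using assms w_s_less by simp
  show "W_profile (r_of_t p t) = W_s p t" if t: "t \<in> {w_s p (1/2)<..}" for t
  proof -
    obtain r' where "r' > 1/2" "t = w_s p r'"
      using t w_s_image by auto
    then show ?thesis
      using W_s_w_s_eq r_of_t_w_s by simp
  qed
qed simp

lemma W_s_derivative_bounds:
  assumes "t \<ge> 0"
  shows "W_s p t > 0" and "deriv (W_s p) t > 0" and "deriv (W_s p) t \<le> 2 / (p - 1) * W_s p t"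
proof -
  obtain r where r: "r \<ge> 1" "t = w_s p r"
    using w_s_preimage_ge_1[OF assms] .
  define q where "q = schw_rho p r / schw_tail r"
  define m where "m = rho_log_deriv r + 1 / r"
  have q: "q > 0"
    using r schw_rho_pos schw_tail_pos by (simp add: q_def)
  have m: "m \<le> 0" "m + q > 0"
    using rho_log_deriv_bounds[OF r(1)] by (simp_all add: m_def q_def)
  have W: "W_s p t = W_profile r"
    using r W_s_w_s_eq by simp
  have dW: "deriv (W_s p) t = 2 / (p - 1) * W_profile r * ((m + q) / q)"
    using DERIV_imp_deriv[OF W_s_has_derivative] r q p_gt_1
    by (simp add: m_def q_def field_simps)
  have "W_profile r > 0"
    using r W_profile_pos by simp
  then show "W_s p t > 0"
    unfolding W .
  have factor: "2 / (p - 1) * W_profile r > 0"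
    using \<open>W_profile r > 0\<close> p_gt_1 by simp
  have ratio: "0 < (m + q) / q" "(m + q) / q \<le> 1"
    using m q by simp_all
  show "deriv (W_s p) t > 0"
    unfolding dW using factor ratio(1) by (rule mult_pos_pos)
  show "deriv (W_s p) t \<le> 2 / (p - 1) * W_s p t"
    unfolding W dW using ratio(2) less_imp_le[OF factor] by (simp only: mult_left_le)
qed

end

theorem proposition3p10:
  fixes p :: real
  assumes "1 < p" and "p < 2"
  shows "\<exists>\<epsilon>0>0. \<forall>\<epsilon>. 0 < \<epsilon> \<and> \<epsilon> < \<epsilon>0 \<longrightarrow>
           (\<forall>g h g' h' :: real \<Rightarrow> real.
              (\<forall>t\<ge>0. (g has_real_derivative g' t) (at t within {0..})
                    \<and> (h has_real_derivative h' t) (at t within {0..})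
                    \<and> system_S p t (g t) (h t) (g' t) (h' t))
              \<and> g 0 = -1 \<and> h 0 = \<epsilon>
              \<longrightarrow> (\<forall>t\<ge>0. h t > 0 \<and> g t < 0))"
proof -
  have p: "1 < p" "p < 3"
    using assms by simp_all
  have "\<forall>t\<ge>0. h t > 0 \<and> g t < 0"
    if "0 < \<epsilon>" "\<epsilon> < 1 / (3 - p)" and "g 0 = -1" "h 0 = \<epsilon>"
      and sol: "\<forall>t\<ge>0. (g has_real_derivative g' t) (at t within {0..})
                    \<and> (h has_real_derivative h' t) (at t within {0..})
                    \<and> system_S p t (g t) (h t) (g' t) (h' t)"
    for \<epsilon> :: real and g h g' h' :: "real \<Rightarrow> real"
  proof (rule reduced_system_signs[OF p, where g' = g' and h' = h' and a = "\<lambda>t. deriv (W_s p) t / W_s p t"])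
    fix t :: real
    assume "t \<ge> 0"
    note W = W_s_derivative_bounds[OF p this]
    show "(g has_real_derivative g' t) (at t within {0..})" "(h has_real_derivative h' t) (at t within {0..})"
      using sol \<open>t \<ge> 0\<close> by blast+
    show "g' t = - h t + (p - 1) * (5 - p) / 4 * h t * (deriv (W_s p) t / W_s p t)\<^sup>2"
      "(p - 1) * (3 - p) * h' t
        = - g t - 2 * (2 - p) * h t - (p - 1) * (5 - p) / 2 * h t * (deriv (W_s p) t / W_s p t)"
      using system_S_solved[OF _ W(1,2)] sol \<open>t \<ge> 0\<close> by blast+
    show "0 \<le> deriv (W_s p) t / W_s p t \<and> deriv (W_s p) t / W_s p t \<le> 2 / (p - 1)"
      using W by (simp add: pos_divide_le_eq)
  next
    show "h 0 > 0" "g 0 + (3 - p) * h 0 < 0"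
      using that p by (simp_all add: field_simps)
  qed
  then show ?thesis
    using p by (intro exI[of _ "1 / (3 - p)"]) auto
qed

end
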